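(* For a polymatroid $\mathrm P$ on $E$ of type $\mathbf a$, one has $\mathrm M_\pi(\mathrm P^\perp)=\mathrm M_\pi(\mathrm P)^\perp$.
   Context: $E=\{1,\dots,m\}$, $\mathbf a\in\mathbb Z^m_{\ge0}$, $n=\sum a_i$, $\widetilde E$ an $n$-element set, $\pi:\widetilde E\to E$ with $|\pi^{-1}(i)|=a_i$. Polymatroid of type $\mathbf a$: submodular monotone $\operatorname{rk}_{\mathrm P}:2^E\to\mathbb Z_{\ge0}$ with $\operatorname{rk}_{\mathrm P}(\emptyset)=0$, $\operatorname{rk}_{\mathrm P}(\{i\})\le a_i$, rank $r=\operatorname{rk}_{\mathrm P}(E)$. Its dual $\mathrm P^\perp$ is the type-$\mathbf a$ polymatroid with $\operatorname{rk}_{\mathrm P^\perp}(S)=\sum_{i\in S}a_i+\operatorname{rk}_{\mathrm P}(E\setminus S)-r$. The multisymmetric lift $\mathrm M_\pi(\mathrm P)$ is the matroid on $\widetilde E$ with rank function $\operatorname{rk}(U)=\min_{A\subseteq E}\{\operatorname{rk}_{\mathrm P}(A)+|U\setminus\pi^{-1}(A)|\}$. $\mathrm M^\perp$ is the usual matroid dual. *)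

theory Defs
  imports Main
begin

definition polymatroid_of_type ::
    "nat \<Rightarrow> (nat \<Rightarrow> nat) \<Rightarrow> (nat set \<Rightarrow> int) \<Rightarrow> bool" where
  "polymatroid_of_type m a rk \<longleftrightarrow>
     rk {} = 0 \<and>
     (\<forall>A. A \<subseteq> {1..m} \<longrightarrow> rk A \<ge> 0) \<and>
     (\<forall>A B. A \<subseteq> B \<and> B \<subseteq> {1..m} \<longrightarrow> rk A \<le> rk B) \<and>
     (\<forall>A B. A \<subseteq> {1..m} \<and> B \<subseteq> {1..m} \<longrightarrow> rk (A \<union> B) + rk (A \<inter> B) \<le> rk A + rk B) \<and>
     (\<forall>i\<in>{1..m}. rk {i} \<le> int (a i))"

definition polymatroid_dual ::
    "nat \<Rightarrow> (nat \<Rightarrow> nat) \<Rightarrow> (nat set \<Rightarrow> int) \<Rightarrow> nat set \<Rightarrow> int" where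
  "polymatroid_dual m a rk S = int (\<Sum>i\<in>S. a i) + rk ({1..m} - S) - rk {1..m}"

definition multisym_lift ::
    "nat \<Rightarrow> ('b \<Rightarrow> nat) \<Rightarrow> (nat set \<Rightarrow> int) \<Rightarrow> 'b set \<Rightarrow> int" where
  "multisym_lift m \<pi> rk U = Min {rk A + int (card (U - \<pi> -` A)) | A. A \<subseteq> {1..m}}"

definition matroid_dual_rank :: "'b set \<Rightarrow> ('b set \<Rightarrow> int) \<Rightarrow> 'b set \<Rightarrow> int" where
  "matroid_dual_rank X rk U = int (card U) + rk (X - U) - rk X"

end

theory Submission
  imports Defs
begin

text \<open>Reindex the minimum defining the rank of the lift of the dual polymatroid by
  \<open>A \<mapsto> E - A\<close>. Counting fibres of \<open>\<pi>\<close>, the term for \<open>A = E - B\<close> becomes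
  \<open>|U| - r + rk B + |(Et - U) - \<pi> -` B|\<close>, so the lift of the dual has rank
  \<open>|U| + \<rho> (Et - U) - r\<close>, where \<open>\<rho>\<close> is the rank function of the lift of \<open>P\<close>. This is the
  dual rank of \<open>\<rho>\<close> because \<open>\<rho> Et = r\<close>: the term for \<open>B\<close> in \<open>\<rho> Et\<close> is
  \<open>rk B + (\<Sum>i\<in>E - B. a i) \<ge> rk E\<close>, by subadditivity of \<open>rk\<close> and \<open>rk {i} \<le> a i\<close>.\<close>

lemma image_Diff_Pow: "(\<lambda>B. E - B) ` Pow E = Pow E"
proof
  show "Pow E \<subseteq> (\<lambda>B. E - B) ` Pow E"
  proof
    fix A
    assume "A \<in> Pow E"
    then have "A = E - (E - A)"
      by blast
    then show "A \<in> (\<lambda>B. E - B) ` Pow E"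
      by blast
  qed
qed blast

lemma multisym_lift_eq_Min_image:
  "multisym_lift m \<pi> rk U = Min ((\<lambda>A. rk A + int (card (U - \<pi> -` A))) ` Pow {1..m})"
proof -
  have "{rk A + int (card (U - \<pi> -` A)) | A. A \<subseteq> {1..m}}
      = (\<lambda>A. rk A + int (card (U - \<pi> -` A))) ` Pow {1..m}"
    by auto
  then show ?thesis
    unfolding multisym_lift_def by simp
qed

lemma polymatroid_rank_Un_le:
  assumes "polymatroid_of_type m a rk" "A \<subseteq> {1..m}" "B \<subseteq> {1..m}"
  shows "rk (A \<union> B) \<le> rk A + rk B"
proof -
  have "A \<inter> B \<subseteq> {1..m}"
    using assms(2) by blast
  then have "rk (A \<union> B) + rk (A \<inter> B) \<le> rk A + rk B" and "0 \<le> rk (A \<inter> B)"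
    using assms unfolding polymatroid_of_type_def by simp_all
  then show ?thesis by linarith
qed

lemma polymatroid_rank_le_sum:
  assumes P: "polymatroid_of_type m a rk" and "C \<subseteq> {1..m}"
  shows "rk C \<le> int (\<Sum>i\<in>C. a i)"
proof -
  have "finite C"
    using \<open>C \<subseteq> {1..m}\<close> finite_subset by blast
  from this \<open>C \<subseteq> {1..m}\<close> show ?thesis
  proof (induction C rule: finite_induct)
    case empty
    then show ?case
      using P unfolding polymatroid_of_type_def by simp
  next
    case (insert i C)
    have "rk (insert i C) = rk ({i} \<union> C)"
      by simp
    also have "\<dots> \<le> rk {i} + rk C"
      using polymatroid_rank_Un_le[OF P, of "{i}" C] insert.prems by simp
    also have "\<dots> \<le> int (a i) + int (\<Sum>i\<in>C. a i)"
      using P insert unfolding polymatroid_of_type_def by (simp add: add_mono)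
    finally show ?case
      using insert.hyps by simp
  qed
qed

lemma card_Int_vimage_eq_sum_fibres:
  assumes "finite X" "finite A"
  shows "card (X \<inter> \<pi> -` A) = (\<Sum>i\<in>A. card {x\<in>X. \<pi> x = i})"
proof -
  have "card (X \<inter> \<pi> -` A) = card (\<Union>i\<in>A. {x\<in>X. \<pi> x = i})"
    by (rule arg_cong[where f = card]) blast
  also have "\<dots> = (\<Sum>i\<in>A. card {x\<in>X. \<pi> x = i})"
    by (rule card_UN_disjoint) (use assms in auto)
  finally show ?thesis .
qed

lemma card_Int_add_card_Diff:
  assumes "finite X" "U \<subseteq> X"
  shows "card (X \<inter> P) + card (U - P) = card U + card ((X - U) \<inter> P)"
proof -
  have "finite U"
    using assms finite_subset by blast
  have "X \<inter> P = (U \<inter> P) \<union> ((X - U) \<inter> P)"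
    using assms(2) by blast
  then have "card (X \<inter> P) = card (U \<inter> P) + card ((X - U) \<inter> P)"
    using assms(1) \<open>finite U\<close> by (simp add: card_Un_disjoint disjoint_iff)
  moreover have "card U = card (U \<inter> P) + card (U - P)"
    using card_Int_Diff[OF \<open>finite U\<close>] .
  ultimately show ?thesis by linarith
qed

lemma multisym_lift_polymatroid_dual:
  assumes "finite Et" "\<pi> ` Et \<subseteq> {1..m}"
    and fibres: "\<forall>i\<in>{1..m}. card {x\<in>Et. \<pi> x = i} = a i"
    and "U \<subseteq> Et"
  shows "multisym_lift m \<pi> (polymatroid_dual m a rk) U
           = int (card U) + multisym_lift m \<pi> rk (Et - U) - rk {1..m}"
proof -
  define E where "E = {1..m}"
  define g where "g B = rk B + int (card ((Et - U) - \<pi> -` B))" for B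
  have term_eq: "polymatroid_dual m a rk (E - B) + int (card (U - \<pi> -` (E - B)))
      = g B + (int (card U) - rk E)" if "B \<subseteq> E" for B
  proof -
    have "(\<Sum>i\<in>E - B. a i) = card (Et \<inter> \<pi> -` (E - B))"
      using card_Int_vimage_eq_sum_fibres[OF assms(1), of "E - B" \<pi>] fibres
      by (simp add: E_def)
    moreover have "(Et - U) - \<pi> -` B = (Et - U) \<inter> \<pi> -` (E - B)"
      using assms(2) by (auto simp: E_def)
    ultimately have "(\<Sum>i\<in>E - B. a i) + card (U - \<pi> -` (E - B))
        = card U + card ((Et - U) - \<pi> -` B)"
      using card_Int_add_card_Diff[OF assms(1,4)] by simp
    then have "int (\<Sum>i\<in>E - B. a i) + int (card (U - \<pi> -` (E - B)))
        = int (card U) + int (card ((Et - U) - \<pi> -` B))"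
      by (metis of_nat_add)
    moreover have "E - (E - B) = B"
      using that by blast
    ultimately show ?thesis
      unfolding polymatroid_dual_def g_def E_def[symmetric] by simp
  qed
  define h where "h A = polymatroid_dual m a rk A + int (card (U - \<pi> -` A))" for A
  have "h ` Pow E = h ` (\<lambda>B. E - B) ` Pow E"
    by (simp only: image_Diff_Pow)
  then have reindex: "h ` Pow E = (\<lambda>B. h (E - B)) ` Pow E"
    by (simp only: image_image)
  have "multisym_lift m \<pi> (polymatroid_dual m a rk) U = Min (h ` Pow E)"
    unfolding multisym_lift_eq_Min_image h_def E_def ..
  also have "\<dots> = Min ((\<lambda>B. g B + (int (card U) - rk E)) ` Pow E)"
    using term_eq unfolding reindex h_def by (intro arg_cong[where f = Min] image_cong) auto
  also have "\<dots> = Min (g ` Pow E) + (int (card U) - rk E)"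
    by (rule Min_add_commute) (auto simp: E_def)
  also have "\<dots> = multisym_lift m \<pi> rk (Et - U) + (int (card U) - rk E)"
    unfolding multisym_lift_eq_Min_image g_def E_def ..
  finally show ?thesis
    by (simp add: E_def)
qed

lemma multisym_lift_ground_set:
  assumes "finite Et" "\<pi> ` Et \<subseteq> {1..m}"
    and fibres: "\<forall>i\<in>{1..m}. card {x\<in>Et. \<pi> x = i} = a i"
    and P: "polymatroid_of_type m a rk"
  shows "multisym_lift m \<pi> rk Et = rk {1..m}"
proof -
  define E where "E = {1..m}"
  have lower: "rk E \<le> rk B + int (card (Et - \<pi> -` B))" if "B \<subseteq> E" for B
  proof -
    have "Et - \<pi> -` B = Et \<inter> \<pi> -` (E - B)"
      using assms(2) by (auto simp: E_def)
    then have card_eq: "card (Et - \<pi> -` B) = (\<Sum>i\<in>E - B. a i)"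
      using card_Int_vimage_eq_sum_fibres[OF assms(1), of "E - B" \<pi>] fibres
      by (simp add: E_def)
    have "rk E = rk (B \<union> (E - B))"
      using that by (simp add: Un_absorb1)
    also have "\<dots> \<le> rk B + rk (E - B)"
      using polymatroid_rank_Un_le[OF P, of B "E - B"] that by (auto simp: E_def)
    also have "\<dots> \<le> rk B + int (\<Sum>i\<in>E - B. a i)"
      using polymatroid_rank_le_sum[OF P, of "E - B"] by (simp add: E_def)
    finally show ?thesis
      using card_eq by simp
  qed
  have "Et - \<pi> -` E = {}"
    using assms(2) by (auto simp: E_def)
  then have "card (Et - \<pi> -` E) = 0"
    by (simp only: card.empty)
  then have "rk E \<in> (\<lambda>A. rk A + int (card (Et - \<pi> -` A))) ` Pow E"
    by (intro rev_image_eqI[of E]) simp_all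
  with lower show ?thesis
    unfolding multisym_lift_eq_Min_image E_def by (intro Min_eqI) auto
qed

theorem proposition3p6:
  fixes m :: nat and a :: "nat \<Rightarrow> nat" and Et :: "'b set" and \<pi> :: "'b \<Rightarrow> nat"
    and rk :: "nat set \<Rightarrow> int"
  assumes "finite Et"
    and "card Et = (\<Sum>i\<in>{1..m}. a i)"
    and "\<pi> ` Et \<subseteq> {1..m}"
    and "\<forall>i\<in>{1..m}. card {x\<in>Et. \<pi> x = i} = a i"
    and "polymatroid_of_type m a rk"
  shows "\<forall>U. U \<subseteq> Et \<longrightarrow>
           multisym_lift m \<pi> (polymatroid_dual m a rk) U
             = matroid_dual_rank Et (multisym_lift m \<pi> rk) U"
proof (intro allI impI)
  fix U
  assume "U \<subseteq> Et"
  then show "multisym_lift m \<pi> (polymatroid_dual m a rk) U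
      = matroid_dual_rank Et (multisym_lift m \<pi> rk) U"
    using multisym_lift_polymatroid_dual[OF assms(1,3,4)]
      multisym_lift_ground_set[OF assms(1,3,4,5)]
    unfolding matroid_dual_rank_def by simp
qed

end
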